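(* Let $\mathbb V$ be the 2-vector space of a 2-term complex $V_1\xrightarrow{\mathrm d}V_0$ and $\mu=(\mu_0,\mu_1,\mu_2)$ an isomorphism of Lie 2-algebras $\mathfrak{gl}(\mathbb V)\to\mathfrak{gl}(\mathbb V)$. For objects $e_1=A+u$, $e_2=B+v$, $e_3=C+w$ of $\mathfrak{gl}(\mathbb V)\oplus\mathbb V$, set $J_{e_1,e_2,e_3}=[[A,B],C]+\mu_2(A,B)(w)$, where $[[A,B],C]$ denotes the identity morphism of $[[A,B],C]$ in $\mathfrak{gl}(\mathbb V)$ and $\mu_2(A,B)(w)$ is the action of the morphism $\mu_2(A,B)$ on the identity morphism of $w$. Then $J_{e_1,e_2,e_3}$ is a morphism from $\{\{e_1,e_2\}_\mu,e_3\}_\mu$ to $\{e_1,\{e_2,e_3\}_\mu\}_\mu-\{e_2,\{e_1,e_3\}_\mu\}_\mu$, and $J$ is a natural transformation between these two trilinear functors.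
   Context: All vector spaces are finite-dimensional over $\mathbb R$. A 2-vector space is a category internal to vector spaces. For a 2-term complex $V_1\xrightarrow{\mathrm d}V_0$, $\mathbb V$ has objects $V_0$, morphisms $V_0\oplus V_1$ ($u+m$), $s(u+m)=u$, $t(u+m)=u+\mathrm dm$, composition $(u+m)\cdot(u+\mathrm dm+n)=u+m+n$. Let $\mathrm{End}^0_{\mathrm d}(\mathbb V)=\{A=(A_0,A_1):A_0\mathrm d=\mathrm dA_1\}$, $\mathrm{End}^1(\mathbb V)=\mathrm{Hom}(V_0,V_1)$, $\delta\phi=(\mathrm d\phi,\phi\mathrm d)$; brackets $[A,B]$ componentwise commutator, $[A,\phi]=-[\phi,A]=A_1\phi-\phi A_0$, $[\phi,\psi]_\delta=\phi\mathrm d\psi-\psi\mathrm d\phi$. The strict Lie 2-algebra $\mathfrak{gl}(\mathbb V)$ has objects $\mathrm{End}^0_{\mathrm d}(\mathbb V)$, morphisms $A+\phi$, $s(A+\phi)=A$, $t(A+\phi)=A+\delta\phi$, bracket $[A+\phi,B+\psi]=[A,B]+[\phi,\psi]_\delta+[A,\psi]+[\phi,B]$, and acts on $\mathbb V$ by $A(u)=A_0u$, $(A+\phi)(u+m)=A_0u+(A_1m+\phi(u+\mathrm dm))$. A Lie 2-algebra is a 2-vector space $C$ with a skew-symmetric bilinear functor $[\cdot,\cdot]$ and a skew-symmetric trilinear natural isomorphism (Jacobiator) $J_{x,y,z}:[[x,y],z]\to[x,[y,z]]+[[x,z],y]$ satisfying the Jacobiator identity $J_{[w,x],y,z}([J_{w,x,z},y]+1)(J_{w,[x,z],y}+J_{[w,z],x,y}+J_{w,x,[y,z]})=[J_{w,x,y},z](J_{[w,y],x,z}+J_{w,[x,y],z})([J_{w,y,z},x]+1)([w,J_{x,y,z}]+1)$;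 it is strict when $J$ is the identity. A Lie 2-algebra morphism $\mu:C\to C'$ is a linear functor $(\mu_0,\mu_1)$ (object and morphism maps) with a skew-symmetric bilinear natural transformation $\mu_2(u,v):\mu_0[u,v]\to[\mu_0u,\mu_0v]$ such that for all objects $u,v,w$ the composites $\mu_0[[u,v],w]\xrightarrow{\mu_2([u,v],w)}[\mu_0[u,v],\mu_0w]\xrightarrow{[\mu_2(u,v),1]}[[\mu_0u,\mu_0v],\mu_0w]\xrightarrow{J}[\mu_0u,[\mu_0v,\mu_0w]]+[\mu_0v,[\mu_0w,\mu_0u]]$ and $\mu_0[[u,v],w]\xrightarrow{\mu_1J_{u,v,w}}\mu_0[u,[v,w]]+\mu_0[v,[w,u]]\xrightarrow{\mu_2(u,[v,w])+\mu_2(v,[w,u])}[\mu_0u,\mu_0[v,w]]+[\mu_0v,\mu_0[w,u]]\xrightarrow{[1,\mu_2(v,w)]+[1,\mu_2(w,u)]}[\mu_0u,[\mu_0v,\mu_0w]]+[\mu_0v,[\mu_0w,\mu_0u]]$ coincide; it is an isomorphism if $(\mu_0,\mu_1)$ is an isomorphism of 2-vector spaces. The twisted bracket on $\mathfrak{gl}(\mathbb V)\oplus\mathbb V$ is $\{A+\phi+u+m,B+\psi+v+n\}_\mu=[A+\phi,B+\psi]+\mu_1(A+\phi)(v+n)$ on morphisms and $\{A+u,B+v\}_\mu=[A,B]+\mu_0(A)(v)$ on objects. *)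

theory Defs
  imports "HOL-Analysis.Analysis"
begin

text \<open>Two-term complex d : V1 -> V0 with V0 = 'a, V1 = 'b finite-dimensional real spaces.
  Objects of gl(V): pairs (A0,A1); morphisms A + phi: pairs ((A0,A1), phi).\<close>

type_synonym ('a,'b) glob = "('a \<Rightarrow> 'a) \<times> ('b \<Rightarrow> 'b)"
type_synonym ('a,'b) glmor = "('a,'b) glob \<times> ('a \<Rightarrow> 'b)"

definition ob_add :: "('a::real_vector,'b::real_vector) glob \<Rightarrow> ('a,'b) glob \<Rightarrow> ('a,'b) glob" where
  "ob_add A B = ((\<lambda>x. fst A x + fst B x), (\<lambda>m. snd A m + snd B m))"
definition ob_scale :: "real \<Rightarrow> ('a::real_vector,'b::real_vector) glob \<Rightarrow> ('a,'b) glob" where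
  "ob_scale c A = ((\<lambda>x. c *\<^sub>R fst A x), (\<lambda>m. c *\<^sub>R snd A m))"

definition mor_add :: "('a::real_vector,'b::real_vector) glmor \<Rightarrow> ('a,'b) glmor \<Rightarrow> ('a,'b) glmor" where
  "mor_add f g = (ob_add (fst f) (fst g), (\<lambda>x. snd f x + snd g x))"
definition mor_scale :: "real \<Rightarrow> ('a::real_vector,'b::real_vector) glmor \<Rightarrow> ('a,'b) glmor" where
  "mor_scale c f = (ob_scale c (fst f), (\<lambda>x. c *\<^sub>R snd f x))"
definition mor_neg :: "('a::real_vector,'b::real_vector) glmor \<Rightarrow> ('a,'b) glmor" where
  "mor_neg f = mor_scale (-1) f"

definition gl_obj :: "('b::real_vector \<Rightarrow> 'a::real_vector) \<Rightarrow> ('a,'b) glob \<Rightarrow> bool" where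
  "gl_obj d A \<longleftrightarrow> linear (fst A) \<and> linear (snd A) \<and> fst A \<circ> d = d \<circ> snd A"

definition gl_mor :: "('b::real_vector \<Rightarrow> 'a::real_vector) \<Rightarrow> ('a,'b) glmor \<Rightarrow> bool" where
  "gl_mor d f \<longleftrightarrow> gl_obj d (fst f) \<and> linear (snd f)"

definition gl_src :: "('a,'b) glmor \<Rightarrow> ('a,'b) glob" where
  "gl_src f = fst f"

text \<open>t(A + phi) = A + delta phi, delta phi = (d phi, phi d)\<close>
definition gl_tgt :: "('b::real_vector \<Rightarrow> 'a::real_vector) \<Rightarrow> ('a,'b) glmor \<Rightarrow> ('a,'b) glob" where
  "gl_tgt d f = ((\<lambda>x. fst (fst f) x + d (snd f x)), (\<lambda>m. snd (fst f) m + snd f (d m)))"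

definition gl_id :: "('a::real_vector,'b::real_vector) glob \<Rightarrow> ('a,'b) glmor" where
  "gl_id A = (A, (\<lambda>_. 0))"

text \<open>Composition (A+phi).(A+delta phi+psi) = A+phi+psi (diagrammatic order: first f, then g).\<close>
definition gl_comp :: "('a::real_vector,'b::real_vector) glmor \<Rightarrow> ('a,'b) glmor \<Rightarrow> ('a,'b) glmor" where
  "gl_comp f g = (fst f, (\<lambda>x. snd f x + snd g x))"

definition gl_br :: "('a::real_vector,'b::real_vector) glob \<Rightarrow> ('a,'b) glob \<Rightarrow> ('a,'b) glob" where
  "gl_br A B = ((\<lambda>x. fst A (fst B x) - fst B (fst A x)), (\<lambda>m. snd A (snd B m) - snd B (snd A m)))"

text \<open>[A+phi,B+psi] = [A,B] + [phi,psi]_d + [A,psi] + [phi,B], with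
  [phi,psi]_d = phi d psi - psi d phi, [A,psi] = A1 psi - psi A0, [phi,B] = -(B1 phi - phi B0).\<close>
definition gl_br_mor :: "('b::real_vector \<Rightarrow> 'a::real_vector) \<Rightarrow> ('a,'b) glmor \<Rightarrow> ('a,'b) glmor \<Rightarrow> ('a,'b) glmor" where
  "gl_br_mor d f g = (gl_br (fst f) (fst g),
     (\<lambda>x. snd f (d (snd g x)) - snd g (d (snd f x))
         + (snd (fst f) (snd g x) - snd g (fst (fst f) x))
         - (snd (fst g) (snd f x) - snd f (fst (fst g) x))))"

text \<open>Morphisms of V are pairs (u,m) = u + m with s = u, t = u + d m.
  (A+phi)(u+m) = A0 u + (A1 m + phi(u + d m)).\<close>
definition act_mor :: "('b::real_vector \<Rightarrow> 'a::real_vector) \<Rightarrow> ('a,'b) glmor \<Rightarrow> 'a \<times> 'b \<Rightarrow> 'a \<times> 'b" where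
  "act_mor d f um = (fst (fst f) (fst um), snd (fst f) (snd um) + snd f (fst um + d (snd um)))"

definition lie2_iso_gl ::
  "('b::real_vector \<Rightarrow> 'a::real_vector) \<Rightarrow> (('a,'b) glob \<Rightarrow> ('a,'b) glob) \<Rightarrow> (('a,'b) glmor \<Rightarrow> ('a,'b) glmor)
     \<Rightarrow> (('a,'b) glob \<Rightarrow> ('a,'b) glob \<Rightarrow> ('a,'b) glmor) \<Rightarrow> bool" where
  "lie2_iso_gl d \<mu>0 \<mu>1 \<mu>2 \<longleftrightarrow>
     \<comment> \<open>(mu0, mu1) linear functor\<close>
     (\<forall>A. gl_obj d A \<longrightarrow> gl_obj d (\<mu>0 A)) \<and>
     (\<forall>f. gl_mor d f \<longrightarrow> gl_mor d (\<mu>1 f)) \<and>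
     (\<forall>A B. gl_obj d A \<longrightarrow> gl_obj d B \<longrightarrow> \<mu>0 (ob_add A B) = ob_add (\<mu>0 A) (\<mu>0 B)) \<and>
     (\<forall>c A. gl_obj d A \<longrightarrow> \<mu>0 (ob_scale c A) = ob_scale c (\<mu>0 A)) \<and>
     (\<forall>f g. gl_mor d f \<longrightarrow> gl_mor d g \<longrightarrow> \<mu>1 (mor_add f g) = mor_add (\<mu>1 f) (\<mu>1 g)) \<and>
     (\<forall>c f. gl_mor d f \<longrightarrow> \<mu>1 (mor_scale c f) = mor_scale c (\<mu>1 f)) \<and>
     (\<forall>f. gl_mor d f \<longrightarrow> gl_src (\<mu>1 f) = \<mu>0 (gl_src f)) \<and>
     (\<forall>f. gl_mor d f \<longrightarrow> gl_tgt d (\<mu>1 f) = \<mu>0 (gl_tgt d f)) \<and>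
     (\<forall>A. gl_obj d A \<longrightarrow> \<mu>1 (gl_id A) = gl_id (\<mu>0 A)) \<and>
     (\<forall>f g. gl_mor d f \<longrightarrow> gl_mor d g \<longrightarrow> gl_tgt d f = gl_src g \<longrightarrow>
            \<mu>1 (gl_comp f g) = gl_comp (\<mu>1 f) (\<mu>1 g)) \<and>
     \<comment> \<open>mu2(A,B) : mu0[A,B] -> [mu0 A, mu0 B]\<close>
     (\<forall>A B. gl_obj d A \<longrightarrow> gl_obj d B \<longrightarrow>
        gl_mor d (\<mu>2 A B) \<and> gl_src (\<mu>2 A B) = \<mu>0 (gl_br A B) \<and>
        gl_tgt d (\<mu>2 A B) = gl_br (\<mu>0 A) (\<mu>0 B)) \<and>
     \<comment> \<open>skew-symmetric\<close>
     (\<forall>A B. gl_obj d A \<longrightarrow> gl_obj d B \<longrightarrow> \<mu>2 B A = mor_neg (\<mu>2 A B)) \<and>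
     \<comment> \<open>bilinear\<close>
     (\<forall>A A' B. gl_obj d A \<longrightarrow> gl_obj d A' \<longrightarrow> gl_obj d B \<longrightarrow>
        \<mu>2 (ob_add A A') B = mor_add (\<mu>2 A B) (\<mu>2 A' B)) \<and>
     (\<forall>c A B. gl_obj d A \<longrightarrow> gl_obj d B \<longrightarrow> \<mu>2 (ob_scale c A) B = mor_scale c (\<mu>2 A B)) \<and>
     (\<forall>A B B'. gl_obj d A \<longrightarrow> gl_obj d B \<longrightarrow> gl_obj d B' \<longrightarrow>
        \<mu>2 A (ob_add B B') = mor_add (\<mu>2 A B) (\<mu>2 A B')) \<and>
     (\<forall>c A B. gl_obj d A \<longrightarrow> gl_obj d B \<longrightarrow> \<mu>2 A (ob_scale c B) = mor_scale c (\<mu>2 A B)) \<and>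
     \<comment> \<open>natural: mu1[f,g] then mu2(t f, t g) equals mu2(s f, s g) then [mu1 f, mu1 g]\<close>
     (\<forall>f g. gl_mor d f \<longrightarrow> gl_mor d g \<longrightarrow>
        gl_comp (\<mu>1 (gl_br_mor d f g)) (\<mu>2 (gl_tgt d f) (gl_tgt d g)) =
        gl_comp (\<mu>2 (gl_src f) (gl_src g)) (gl_br_mor d (\<mu>1 f) (\<mu>1 g))) \<and>
     \<comment> \<open>coherence with the (identity) Jacobiators of the strict Lie 2-algebra gl(V)\<close>
     (\<forall>A B C. gl_obj d A \<longrightarrow> gl_obj d B \<longrightarrow> gl_obj d C \<longrightarrow>
        gl_comp (gl_comp (\<mu>2 (gl_br A B) C) (gl_br_mor d (\<mu>2 A B) (gl_id (\<mu>0 C))))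
                (gl_id (gl_br (gl_br (\<mu>0 A) (\<mu>0 B)) (\<mu>0 C)))
        =
        gl_comp (gl_comp (\<mu>1 (gl_id (gl_br (gl_br A B) C)))
                         (mor_add (\<mu>2 A (gl_br B C)) (\<mu>2 B (gl_br C A))))
                (mor_add (gl_br_mor d (gl_id (\<mu>0 A)) (\<mu>2 B C))
                         (gl_br_mor d (gl_id (\<mu>0 B)) (\<mu>2 C A)))) \<and>
     \<comment> \<open>isomorphism of 2-vector spaces\<close>
     bij_betw \<mu>0 {A. gl_obj d A} {A. gl_obj d A} \<and>
     bij_betw \<mu>1 {f. gl_mor d f} {f. gl_mor d f}"

text \<open>Objects: (A,u) = A + u; morphisms: (f,(u,m)) = (A+phi) + (u+m).\<close>

definition sv_obj :: "('b::real_vector \<Rightarrow> 'a::real_vector) \<Rightarrow> ('a,'b) glob \<times> 'a \<Rightarrow> bool" where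
  "sv_obj d e \<longleftrightarrow> gl_obj d (fst e)"
definition sv_mor :: "('b::real_vector \<Rightarrow> 'a::real_vector) \<Rightarrow> ('a,'b) glmor \<times> ('a \<times> 'b) \<Rightarrow> bool" where
  "sv_mor d f \<longleftrightarrow> gl_mor d (fst f)"
definition sv_src :: "('a,'b) glmor \<times> ('a \<times> 'b) \<Rightarrow> ('a,'b) glob \<times> 'a" where
  "sv_src f = (gl_src (fst f), fst (snd f))"
definition sv_tgt :: "('b::real_vector \<Rightarrow> 'a::real_vector) \<Rightarrow> ('a,'b) glmor \<times> ('a \<times> 'b) \<Rightarrow> ('a,'b) glob \<times> 'a" where
  "sv_tgt d f = (gl_tgt d (fst f), fst (snd f) + d (snd (snd f)))"
definition sv_comp :: "('a::real_vector,'b::real_vector) glmor \<times> ('a \<times> 'b) \<Rightarrow> ('a,'b) glmor \<times> ('a \<times> 'b) \<Rightarrow> ('a,'b) glmor \<times> ('a \<times> 'b)" where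
  "sv_comp f g = (gl_comp (fst f) (fst g), (fst (snd f), snd (snd f) + snd (snd g)))"
definition sv_obj_diff :: "('a::real_vector,'b::real_vector) glob \<times> 'a \<Rightarrow> ('a,'b) glob \<times> 'a \<Rightarrow> ('a,'b) glob \<times> 'a" where
  "sv_obj_diff e e' = (ob_add (fst e) (ob_scale (-1) (fst e')), snd e - snd e')"
definition sv_mor_diff :: "('a::real_vector,'b::real_vector) glmor \<times> ('a \<times> 'b) \<Rightarrow> ('a,'b) glmor \<times> ('a \<times> 'b) \<Rightarrow> ('a,'b) glmor \<times> ('a \<times> 'b)" where
  "sv_mor_diff f g = (mor_add (fst f) (mor_neg (fst g)), snd f - snd g)"

text \<open>{A+u, B+v}_mu = [A,B] + mu0(A)(v)\<close>
definition tw_obj :: "(('a,'b) glob \<Rightarrow> ('a,'b) glob) \<Rightarrow> ('a::real_vector,'b::real_vector) glob \<times> 'a \<Rightarrow> ('a,'b) glob \<times> 'a \<Rightarrow> ('a,'b) glob \<times> 'a" where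
  "tw_obj \<mu>0 e1 e2 = (gl_br (fst e1) (fst e2), fst (\<mu>0 (fst e1)) (snd e2))"

text \<open>{A+phi+u+m, B+psi+v+n}_mu = [A+phi,B+psi] + mu1(A+phi)(v+n)\<close>
definition tw_mor :: "('b::real_vector \<Rightarrow> 'a::real_vector) \<Rightarrow> (('a,'b) glmor \<Rightarrow> ('a,'b) glmor)
    \<Rightarrow> ('a,'b) glmor \<times> ('a \<times> 'b) \<Rightarrow> ('a,'b) glmor \<times> ('a \<times> 'b) \<Rightarrow> ('a,'b) glmor \<times> ('a \<times> 'b)" where
  "tw_mor d \<mu>1 f1 f2 = (gl_br_mor d (fst f1) (fst f2), act_mor d (\<mu>1 (fst f1)) (snd f2))"

definition Jmu :: "('b::real_vector \<Rightarrow> 'a::real_vector) \<Rightarrow> (('a,'b) glob \<Rightarrow> ('a,'b) glob \<Rightarrow> ('a,'b) glmor)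
    \<Rightarrow> ('a,'b) glob \<times> 'a \<Rightarrow> ('a,'b) glob \<times> 'a \<Rightarrow> ('a,'b) glob \<times> 'a \<Rightarrow> ('a,'b) glmor \<times> ('a \<times> 'b)" where
  "Jmu d \<mu>2 e1 e2 e3 = (gl_id (gl_br (gl_br (fst e1) (fst e2)) (fst e3)), act_mor d (\<mu>2 (fst e1) (fst e2)) (snd e3, 0))"

end

theory Submission
  imports Defs
begin

(* The twisted bracket on gl(V) + V is built from two strict structures: the
   strict Lie 2-algebra gl(V) and its action on the 2-vector space V.
   The Jacobiator J is then shown to be a morphism with the required source and
   target, using only that mu2(A,B) : mu0[A,B] -> [mu0 A, mu0 B].  Naturality of J
   follows from the naturality of mu2: its gl(V)-part is the strict Jacobi identity,
   its V-part the functoriality of the action applied to the naturality square. *)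

lemma gl_objD: "gl_obj d A \<Longrightarrow> linear (fst A)" "gl_obj d A \<Longrightarrow> linear (snd A)"
  unfolding gl_obj_def by auto

lemma gl_morD: "gl_mor d F \<Longrightarrow> gl_obj d (fst F)" "gl_mor d F \<Longrightarrow> linear (snd F)"
  unfolding gl_mor_def by auto

lemma gl_obj_commute: "gl_obj d A \<Longrightarrow> fst A (d x) = d (snd A x)"
  unfolding gl_obj_def by (auto simp: fun_eq_iff)

lemma linear_commutator: "linear f \<Longrightarrow> linear g \<Longrightarrow> linear (\<lambda>x. f (g x) - g (f x))"
  unfolding linear_iff by (simp add: linear_add linear_scale scaleR_diff_right)

lemma gl_obj_br:
  assumes "gl_obj d A" "gl_obj d B" "linear d"
  shows "gl_obj d (gl_br A B)"
proof -
  note l = gl_objD[OF assms(1)] gl_objD[OF assms(2)]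
  have "fst (gl_br A B) (d x) = d (snd (gl_br A B) x)" for x
    using assms(3) l
    by (simp add: gl_br_def gl_obj_commute[OF assms(1)] gl_obj_commute[OF assms(2)] linear_diff)
  then show ?thesis
    using l unfolding gl_obj_def gl_br_def by (auto simp: fun_eq_iff intro!: linear_commutator)
qed

lemma gl_obj_tgt:
  assumes "gl_mor d F" "linear d"
  shows "gl_obj d (gl_tgt d F)"
proof -
  note o = gl_morD[OF assms(1)]
  note l = gl_objD[OF o(1)] o(2)
  have "fst (gl_tgt d F) (d x) = d (snd (gl_tgt d F) x)" for x
    using assms(2) l by (simp add: gl_tgt_def gl_obj_commute[OF o(1)] linear_add)
  moreover have "linear (fst (gl_tgt d F))" "linear (snd (gl_tgt d F))"
    using assms(2) l unfolding gl_tgt_def linear_iff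
    by (simp_all add: linear_add linear_scale scaleR_add_right)
  ultimately show ?thesis unfolding gl_obj_def by (auto simp: fun_eq_iff)
qed

lemma gl_mor_br:
  assumes "gl_mor d F" "gl_mor d G" "linear d"
  shows "gl_mor d (gl_br_mor d F G)"
proof -
  note o = gl_morD[OF assms(1)] gl_morD[OF assms(2)]
  note l = gl_objD[OF o(1)] o(2) gl_objD[OF o(3)] o(4)
  have "linear (snd (gl_br_mor d F G))"
    using assms(3) l unfolding gl_br_mor_def linear_iff
    by (simp add: linear_add linear_scale algebra_simps)
  then show ?thesis
    using gl_obj_br[OF o(1) o(3) assms(3)] unfolding gl_mor_def gl_br_mor_def by simp
qed

lemma gl_br_mor_fst: "fst (gl_br_mor d F G) = gl_br (fst F) (fst G)"
  by (simp add: gl_br_mor_def)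

lemma gl_tgt_id: "linear d \<Longrightarrow> gl_tgt d (gl_id A) = A"
  by (simp add: gl_tgt_def gl_id_def linear_0)

lemma gl_tgt_br:
  assumes "gl_mor d F" "gl_mor d G" "linear d"
  shows "gl_tgt d (gl_br_mor d F G) = gl_br (gl_tgt d F) (gl_tgt d G)"
proof -
  note o = gl_morD[OF assms(1)] gl_morD[OF assms(2)]
  note l = gl_objD[OF o(1)] o(2) gl_objD[OF o(3)] o(4)
  show ?thesis
    unfolding gl_tgt_def gl_br_mor_def gl_br_def
    by (simp add: fun_eq_iff linear_add[OF assms(3)] linear_diff[OF assms(3)]
        linear_add[OF l(1)] linear_add[OF l(2)] linear_add[OF l(3)] linear_add[OF l(4)]
        linear_add[OF l(5)] linear_add[OF l(6)]
        gl_obj_commute[OF o(1)] gl_obj_commute[OF o(3)] algebra_simps)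
qed

lemma gl_jacobi_obj:
  assumes "gl_obj d A" "gl_obj d B" "gl_obj d C"
  shows "gl_br (gl_br A B) C = ob_add (gl_br A (gl_br B C)) (ob_scale (-1) (gl_br B (gl_br A C)))"
proof -
  note l = gl_objD[OF assms(1)] gl_objD[OF assms(2)] gl_objD[OF assms(3)]
  show ?thesis
    unfolding gl_br_def ob_add_def ob_scale_def
    by (simp add: fun_eq_iff linear_diff[OF l(1)] linear_diff[OF l(2)] linear_diff[OF l(3)]
        linear_diff[OF l(4)] linear_diff[OF l(5)] linear_diff[OF l(6)] algebra_simps)
qed

text \<open>Jacobi identity on morphisms of gl(V); this is why gl(V) is strict.\<close>
lemma gl_jacobi_mor:
  assumes "gl_mor d F" "gl_mor d G" "gl_mor d H" "linear d"
  shows "gl_br_mor d (gl_br_mor d F G) H =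
           mor_add (gl_br_mor d F (gl_br_mor d G H)) (mor_neg (gl_br_mor d G (gl_br_mor d F H)))"
proof -
  note o = gl_morD[OF assms(1)] gl_morD[OF assms(2)] gl_morD[OF assms(3)]
  note l = gl_objD[OF o(1)] o(2) gl_objD[OF o(3)] o(4) gl_objD[OF o(5)] o(6)
  have "snd (gl_br_mor d (gl_br_mor d F G) H) x =
     snd (gl_br_mor d F (gl_br_mor d G H)) x - snd (gl_br_mor d G (gl_br_mor d F H)) x" for x
    unfolding gl_br_mor_def gl_br_def
    by (simp add: linear_add[OF assms(4)] linear_diff[OF assms(4)]
        linear_add[OF l(1)] linear_add[OF l(2)] linear_add[OF l(3)] linear_add[OF l(4)]
        linear_add[OF l(5)] linear_add[OF l(6)] linear_add[OF l(7)] linear_add[OF l(8)]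
        linear_add[OF l(9)] linear_diff[OF l(1)] linear_diff[OF l(2)] linear_diff[OF l(3)]
        linear_diff[OF l(4)] linear_diff[OF l(5)] linear_diff[OF l(6)] linear_diff[OF l(7)]
        linear_diff[OF l(8)] linear_diff[OF l(9)]
        gl_obj_commute[OF o(1)] gl_obj_commute[OF o(3)] gl_obj_commute[OF o(5)] algebra_simps)
  moreover have "fst (gl_br_mor d (gl_br_mor d F G) H) =
     ob_add (gl_br (fst F) (gl_br (fst G) (fst H))) (ob_scale (-1) (gl_br (fst G) (gl_br (fst F) (fst H))))"
    using gl_jacobi_obj[OF o(1) o(3) o(5)] by (simp add: gl_br_mor_def)
  ultimately show ?thesis
    by (simp add: prod_eq_iff fun_eq_iff mor_add_def mor_neg_def mor_scale_def gl_br_mor_def)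
qed

lemma act_mor_id:
  assumes "gl_mor d P" "linear d"
  shows "act_mor d P (w, 0) = (fst (fst P) w, snd P w)"
  using assms by (simp add: act_mor_def linear_0 gl_objD(2)[OF gl_morD(1)])

text \<open>Functoriality of the action in the gl(V)-variable, written with the two ways of
  factoring a morphism \<open>u + m\<close> of V through an identity morphism.\<close>
lemma act_comp_tgt_id:
  assumes "gl_mor d Y" "linear d"
  shows "snd (act_mor d (gl_comp X Y) (u, m)) = snd (act_mor d X (u, m)) + snd (act_mor d Y (u + d m, 0))"
  using act_mor_id[OF assms] by (simp add: act_mor_def gl_comp_def)

lemma act_comp_src_id:
  assumes "gl_mor d X" "gl_tgt d X = fst Y" "linear d"
  shows "snd (act_mor d (gl_comp X Y) (u, m)) = snd (act_mor d X (u, 0)) + snd (act_mor d Y (u, m))"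
proof -
  have "snd (fst Y) m = snd (fst X) m + snd X (d m)"
    using arg_cong[OF assms(2), of "\<lambda>Z. snd Z m"] by (simp add: gl_tgt_def)
  then show ?thesis
    using act_mor_id[OF assms(1,3)]
    by (simp add: act_mor_def gl_comp_def linear_add[OF gl_morD(2)[OF assms(1)]] algebra_simps)
qed

lemma act_br_mor:
  assumes "gl_mor d M" "gl_mor d N" "linear d"
  shows "act_mor d (gl_br_mor d M N) x = act_mor d M (act_mor d N x) - act_mor d N (act_mor d M x)"
proof -
  note o = gl_morD[OF assms(1)] gl_morD[OF assms(2)]
  note l = gl_objD[OF o(1)] o(2) gl_objD[OF o(3)] o(4)
  show ?thesis
    by (cases x) (simp add: act_mor_def gl_br_mor_def gl_br_def linear_add[OF assms(3)]
        linear_add[OF l(1)] linear_add[OF l(2)] linear_add[OF l(3)] linear_add[OF l(4)]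
        linear_add[OF l(5)] linear_add[OF l(6)]
        gl_obj_commute[OF o(1)] gl_obj_commute[OF o(3)] algebra_simps)
qed

lemma sv_mor_tw_mor:
  "linear d \<Longrightarrow> sv_mor d f \<Longrightarrow> sv_mor d g \<Longrightarrow> sv_mor d (tw_mor d \<mu>1 f g)"
  by (simp add: sv_mor_def tw_mor_def gl_mor_br)

lemma sv_src_tw_mor:
  assumes "gl_src (\<mu>1 (fst f)) = \<mu>0 (gl_src (fst f))"
  shows "sv_src (tw_mor d \<mu>1 f g) = tw_obj \<mu>0 (sv_src f) (sv_src g)"
  using assms by (simp add: sv_src_def tw_mor_def tw_obj_def gl_src_def gl_br_mor_def act_mor_def)

lemma sv_tgt_tw_mor:
  assumes "linear d" "sv_mor d f" "sv_mor d g" "gl_mor d (\<mu>1 (fst f))"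
    and "gl_tgt d (\<mu>1 (fst f)) = \<mu>0 (gl_tgt d (fst f))"
  shows "sv_tgt d (tw_mor d \<mu>1 f g) = tw_obj \<mu>0 (sv_tgt d f) (sv_tgt d g)"
proof -
  define M where "M = \<mu>1 (fst f)"
  have oM: "gl_obj d (fst M)" using assms(4) M_def by (simp add: gl_morD)
  have "fst (fst M) u + d (snd (fst M) m + snd M (u + d m)) = fst (gl_tgt d M) (u + d m)" for u m
    by (simp add: gl_tgt_def linear_add[OF assms(1)] linear_add[OF gl_objD(1)[OF oM]]
        gl_obj_commute[OF oM] add.assoc)
  then show ?thesis
    using assms gl_tgt_br[of d "fst f" "fst g"]
    by (simp add: sv_tgt_def tw_mor_def tw_obj_def act_mor_def sv_mor_def M_def)
qed

lemma sv_src_mor_diff: "sv_src (sv_mor_diff f g) = sv_obj_diff (sv_src f) (sv_src g)"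
  by (simp add: sv_src_def sv_mor_diff_def sv_obj_diff_def gl_src_def mor_add_def mor_neg_def mor_scale_def)

text \<open>Only the source and target of \<open>\<mu>2(A,B)\<close> enter: the identity on \<open>[[A,B],C]\<close>
  plus \<open>\<mu>2(A,B)(w)\<close> runs from \<open>{{e1,e2},e3}\<close> to \<open>{e1,{e2,e3}} - {e2,{e1,e3}}\<close>.\<close>
lemma Jmu_morphism:
  fixes u v w :: "'a::real_vector"
  assumes "linear d" "gl_obj d A" "gl_obj d B" "gl_obj d C"
    and "gl_mor d (\<mu>2 A B)" "gl_src (\<mu>2 A B) = \<mu>0 (gl_br A B)"
    and "gl_tgt d (\<mu>2 A B) = gl_br (\<mu>0 A) (\<mu>0 B)"
  shows "sv_mor d (Jmu d \<mu>2 (A, u) (B, v) (C, w))"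
    and "sv_src (Jmu d \<mu>2 (A, u) (B, v) (C, w)) = tw_obj \<mu>0 (tw_obj \<mu>0 (A, u) (B, v)) (C, w)"
    and "sv_tgt d (Jmu d \<mu>2 (A, u) (B, v) (C, w)) =
           sv_obj_diff (tw_obj \<mu>0 (A, u) (tw_obj \<mu>0 (B, v) (C, w))) (tw_obj \<mu>0 (B, v) (tw_obj \<mu>0 (A, u) (C, w)))"
proof -
  have J: "Jmu d \<mu>2 (A, u) (B, v) (C, w) = (gl_id (gl_br (gl_br A B) C), fst (fst (\<mu>2 A B)) w, snd (\<mu>2 A B) w)"
    using act_mor_id[OF assms(5,1)] by (simp add: Jmu_def)
  have "linear (\<lambda>_::'a. 0::'b)" by (simp add: linear_iff)
  then show "sv_mor d (Jmu d \<mu>2 (A, u) (B, v) (C, w))"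
    using gl_obj_br[OF gl_obj_br[OF assms(2,3,1)] assms(4,1)]
    by (simp add: J sv_mor_def gl_mor_def gl_id_def)
  show "sv_src (Jmu d \<mu>2 (A, u) (B, v) (C, w)) = tw_obj \<mu>0 (tw_obj \<mu>0 (A, u) (B, v)) (C, w)"
    using assms(6) by (simp add: J sv_src_def gl_src_def gl_id_def tw_obj_def)
  have "fst (fst (\<mu>2 A B)) w + d (snd (\<mu>2 A B) w) = fst (gl_br (\<mu>0 A) (\<mu>0 B)) w"
    using arg_cong[OF assms(7), of "\<lambda>Z. fst Z w"] by (simp add: gl_tgt_def)
  then show "sv_tgt d (Jmu d \<mu>2 (A, u) (B, v) (C, w)) =
           sv_obj_diff (tw_obj \<mu>0 (A, u) (tw_obj \<mu>0 (B, v) (C, w))) (tw_obj \<mu>0 (B, v) (tw_obj \<mu>0 (A, u) (C, w)))"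
    using gl_jacobi_obj[OF assms(2-4)] gl_tgt_id[OF assms(1)]
    by (simp add: J sv_tgt_def tw_obj_def sv_obj_diff_def gl_br_def)
qed

context
  fixes d :: "'b::real_vector \<Rightarrow> 'a::real_vector"
    and \<mu>0 :: "('a,'b) glob \<Rightarrow> ('a,'b) glob"
    and \<mu>1 :: "('a,'b) glmor \<Rightarrow> ('a,'b) glmor"
    and \<mu>2 :: "('a,'b) glob \<Rightarrow> ('a,'b) glob \<Rightarrow> ('a,'b) glmor"
  assumes lin: "linear d"
    and iso: "lie2_iso_gl d \<mu>0 \<mu>1 \<mu>2"
begin

lemma mu1_mor: "gl_mor d F \<Longrightarrow> gl_mor d (\<mu>1 F)"
  using iso unfolding lie2_iso_gl_def by (elim conjE) blast

lemma mu1_src: "gl_mor d F \<Longrightarrow> gl_src (\<mu>1 F) = \<mu>0 (gl_src F)"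
  using iso unfolding lie2_iso_gl_def by (elim conjE) blast

lemma mu1_tgt: "gl_mor d F \<Longrightarrow> gl_tgt d (\<mu>1 F) = \<mu>0 (gl_tgt d F)"
  using iso unfolding lie2_iso_gl_def by (elim conjE) blast

lemma mu2_mor:
  assumes "gl_obj d A" "gl_obj d B"
  shows "gl_mor d (\<mu>2 A B)" "gl_src (\<mu>2 A B) = \<mu>0 (gl_br A B)" "gl_tgt d (\<mu>2 A B) = gl_br (\<mu>0 A) (\<mu>0 B)"
proof -
  have "\<forall>A B. gl_obj d A \<longrightarrow> gl_obj d B \<longrightarrow> gl_mor d (\<mu>2 A B) \<and>
          gl_src (\<mu>2 A B) = \<mu>0 (gl_br A B) \<and> gl_tgt d (\<mu>2 A B) = gl_br (\<mu>0 A) (\<mu>0 B)"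
    using iso unfolding lie2_iso_gl_def by (elim conjE) assumption
  then show "gl_mor d (\<mu>2 A B)" "gl_src (\<mu>2 A B) = \<mu>0 (gl_br A B)"
      "gl_tgt d (\<mu>2 A B) = gl_br (\<mu>0 A) (\<mu>0 B)"
    using assms by blast+
qed

lemma mu2_natural:
  assumes "gl_mor d F" "gl_mor d G"
  shows "gl_comp (\<mu>1 (gl_br_mor d F G)) (\<mu>2 (gl_tgt d F) (gl_tgt d G)) =
         gl_comp (\<mu>2 (gl_src F) (gl_src G)) (gl_br_mor d (\<mu>1 F) (\<mu>1 G))"
proof -
  have "\<forall>F G. gl_mor d F \<longrightarrow> gl_mor d G \<longrightarrow>
          gl_comp (\<mu>1 (gl_br_mor d F G)) (\<mu>2 (gl_tgt d F) (gl_tgt d G)) =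
          gl_comp (\<mu>2 (gl_src F) (gl_src G)) (gl_br_mor d (\<mu>1 F) (\<mu>1 G))"
    using iso unfolding lie2_iso_gl_def by (elim conjE) assumption
  then show ?thesis using assms by blast
qed

lemma J_morphism:
  assumes "sv_obj d e1" "sv_obj d e2" "sv_obj d e3"
  shows "sv_mor d (Jmu d \<mu>2 e1 e2 e3) \<and>
         sv_src (Jmu d \<mu>2 e1 e2 e3) = tw_obj \<mu>0 (tw_obj \<mu>0 e1 e2) e3 \<and>
         sv_tgt d (Jmu d \<mu>2 e1 e2 e3) =
           sv_obj_diff (tw_obj \<mu>0 e1 (tw_obj \<mu>0 e2 e3)) (tw_obj \<mu>0 e2 (tw_obj \<mu>0 e1 e3))"
proof -
  obtain A u B v C w where e: "e1 = (A, u)" "e2 = (B, v)" "e3 = (C, w)"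
    by (metis prod.exhaust)
  have o: "gl_obj d A" "gl_obj d B" "gl_obj d C" using assms e by (simp_all add: sv_obj_def)
  show ?thesis
    unfolding e using Jmu_morphism[where ?\<mu>0.0 = \<mu>0 and ?\<mu>2.0 = \<mu>2, OF lin o mu2_mor[OF o(1,2)]] by blast
qed

lemma J_tgt_match:
  assumes "sv_mor d f1" "sv_mor d f2" "sv_mor d f3"
  shows "sv_tgt d (tw_mor d \<mu>1 (tw_mor d \<mu>1 f1 f2) f3) =
           sv_src (Jmu d \<mu>2 (sv_tgt d f1) (sv_tgt d f2) (sv_tgt d f3))"
proof -
  have m: "gl_mor d (fst f)" if "sv_mor d f" for f using that by (simp add: sv_mor_def)
  have t: "sv_obj d (sv_tgt d f)" if "sv_mor d f" for f
    using gl_obj_tgt[OF m[OF that] lin] by (simp add: sv_obj_def sv_tgt_def)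
  have "sv_tgt d (tw_mor d \<mu>1 (tw_mor d \<mu>1 f1 f2) f3) =
          tw_obj \<mu>0 (tw_obj \<mu>0 (sv_tgt d f1) (sv_tgt d f2)) (sv_tgt d f3)"
    using assms sv_mor_tw_mor[OF lin assms(1,2)] m[OF sv_mor_tw_mor[OF lin assms(1,2)]]
    by (simp add: sv_tgt_tw_mor lin mu1_mor mu1_tgt m)
  then show ?thesis using J_morphism[OF t[OF assms(1)] t[OF assms(2)] t[OF assms(3)]] by simp
qed

lemma J_src_match:
  assumes "sv_mor d f1" "sv_mor d f2" "sv_mor d f3"
  shows "sv_tgt d (Jmu d \<mu>2 (sv_src f1) (sv_src f2) (sv_src f3)) =
           sv_src (sv_mor_diff (tw_mor d \<mu>1 f1 (tw_mor d \<mu>1 f2 f3)) (tw_mor d \<mu>1 f2 (tw_mor d \<mu>1 f1 f3)))"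
proof -
  have m: "gl_mor d (fst f)" if "sv_mor d f" for f using that by (simp add: sv_mor_def)
  have s: "sv_obj d (sv_src f)" if "sv_mor d f" for f
    using gl_morD(1)[OF m[OF that]] by (simp add: sv_obj_def sv_src_def gl_src_def)
  show ?thesis
    using J_morphism[OF s[OF assms(1)] s[OF assms(2)] s[OF assms(3)]] assms
    by (simp add: sv_src_mor_diff sv_src_tw_mor mu1_src m)
qed

text \<open>Naturality of J.  Its gl(V)-component is the strict Jacobi identity; its V-component
  is the naturality square of \<open>\<mu>2\<close> at \<open>(F1,F2)\<close>, pushed through the action.\<close>
lemma J_natural:
  assumes "sv_mor d f1" "sv_mor d f2" "sv_mor d f3"
  shows "sv_comp (tw_mor d \<mu>1 (tw_mor d \<mu>1 f1 f2) f3) (Jmu d \<mu>2 (sv_tgt d f1) (sv_tgt d f2) (sv_tgt d f3)) =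
         sv_comp (Jmu d \<mu>2 (sv_src f1) (sv_src f2) (sv_src f3))
                 (sv_mor_diff (tw_mor d \<mu>1 f1 (tw_mor d \<mu>1 f2 f3)) (tw_mor d \<mu>1 f2 (tw_mor d \<mu>1 f1 f3)))"
proof -
  obtain F1 x1 F2 x2 F3 u m where f: "f1 = (F1, x1)" "f2 = (F2, x2)" "f3 = (F3, (u, m))"
    by (metis prod.exhaust)
  have F: "gl_mor d F1" "gl_mor d F2" "gl_mor d F3" using assms f by (simp_all add: sv_mor_def)
  have A: "gl_obj d (fst F1)" "gl_obj d (fst F2)" using F by (simp_all add: gl_morD)
  have T: "gl_obj d (gl_tgt d F1)" "gl_obj d (gl_tgt d F2)" using F lin by (simp_all add: gl_obj_tgt)
  define G where "G = \<mu>1 (gl_br_mor d F1 F2)"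
  define Q where "Q = \<mu>2 (gl_tgt d F1) (gl_tgt d F2)"
  define P where "P = \<mu>2 (fst F1) (fst F2)"
  define N where "N = gl_br_mor d (\<mu>1 F1) (\<mu>1 F2)"
  have square: "gl_comp G Q = gl_comp P N"
    using mu2_natural[OF F(1,2)] by (simp add: G_def Q_def P_def N_def gl_src_def)
  have mP: "gl_mor d P" and mQ: "gl_mor d Q"
    using mu2_mor(1)[OF A] mu2_mor(1)[OF T] by (simp_all add: P_def Q_def)
  have PN: "gl_tgt d P = fst N"
    using mu2_mor(3)[OF A] mu1_src[OF F(1)] mu1_src[OF F(2)]
    by (simp add: P_def N_def gl_br_mor_def gl_src_def)
  have src_GP: "fst G = fst P" using arg_cong[OF square, of fst] by (simp add: gl_comp_def)
  have V_part: "snd (act_mor d G (u, m)) + snd (act_mor d Q (u + d m, 0)) =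
     snd (act_mor d P (u, 0)) + snd (act_mor d (\<mu>1 F1) (act_mor d (\<mu>1 F2) (u, m))
                                   - act_mor d (\<mu>1 F2) (act_mor d (\<mu>1 F1) (u, m)))"
    using act_comp_tgt_id[OF mQ lin, of G u m] act_comp_src_id[OF mP PN lin, of u m] square
      act_br_mor[OF mu1_mor[OF F(1)] mu1_mor[OF F(2)] lin, of "(u, m)"]
    by (simp add: N_def)
  have gl_part: "snd (gl_br_mor d (gl_br_mor d F1 F2) F3) =
      snd (mor_add (gl_br_mor d F1 (gl_br_mor d F2 F3)) (mor_neg (gl_br_mor d F2 (gl_br_mor d F1 F3))))"
    using gl_jacobi_mor[OF F lin] by simp
  have fst_act: "fst (act_mor d X y) = fst (fst X) (fst y)" for X y
    by (simp add: act_mor_def)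
  show ?thesis
    using V_part gl_part src_GP
    by (simp add: f sv_comp_def tw_mor_def Jmu_def sv_tgt_def sv_src_def sv_mor_diff_def gl_comp_def
        gl_id_def gl_src_def G_def[symmetric] Q_def[symmetric] P_def[symmetric] fst_act
        gl_br_mor_fst)
qed

end

theorem mainTheorem13:
  fixes d :: "'b::euclidean_space \<Rightarrow> 'a::euclidean_space"
    and \<mu>0 :: "('a,'b) glob \<Rightarrow> ('a,'b) glob"
    and \<mu>1 :: "('a,'b) glmor \<Rightarrow> ('a,'b) glmor"
    and \<mu>2 :: "('a,'b) glob \<Rightarrow> ('a,'b) glob \<Rightarrow> ('a,'b) glmor"
  assumes "linear d"
    and "lie2_iso_gl d \<mu>0 \<mu>1 \<mu>2"
  shows "(\<forall>e1 e2 e3. sv_obj d e1 \<longrightarrow> sv_obj d e2 \<longrightarrow> sv_obj d e3 \<longrightarrow>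
            sv_mor d (Jmu d \<mu>2 e1 e2 e3) \<and>
            sv_src (Jmu d \<mu>2 e1 e2 e3) = tw_obj \<mu>0 (tw_obj \<mu>0 e1 e2) e3 \<and>
            sv_tgt d (Jmu d \<mu>2 e1 e2 e3) =
              sv_obj_diff (tw_obj \<mu>0 e1 (tw_obj \<mu>0 e2 e3)) (tw_obj \<mu>0 e2 (tw_obj \<mu>0 e1 e3)))
       \<and>
       (\<forall>f1 f2 f3. sv_mor d f1 \<longrightarrow> sv_mor d f2 \<longrightarrow> sv_mor d f3 \<longrightarrow>
          sv_tgt d (tw_mor d \<mu>1 (tw_mor d \<mu>1 f1 f2) f3) = sv_src (Jmu d \<mu>2 (sv_tgt d f1) (sv_tgt d f2) (sv_tgt d f3)) \<and>
          sv_tgt d (Jmu d \<mu>2 (sv_src f1) (sv_src f2) (sv_src f3)) =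
            sv_src (sv_mor_diff (tw_mor d \<mu>1 f1 (tw_mor d \<mu>1 f2 f3)) (tw_mor d \<mu>1 f2 (tw_mor d \<mu>1 f1 f3))) \<and>
          sv_comp (tw_mor d \<mu>1 (tw_mor d \<mu>1 f1 f2) f3) (Jmu d \<mu>2 (sv_tgt d f1) (sv_tgt d f2) (sv_tgt d f3)) =
          sv_comp (Jmu d \<mu>2 (sv_src f1) (sv_src f2) (sv_src f3))
                  (sv_mor_diff (tw_mor d \<mu>1 f1 (tw_mor d \<mu>1 f2 f3)) (tw_mor d \<mu>1 f2 (tw_mor d \<mu>1 f1 f3))))"
  using J_morphism[OF assms] J_tgt_match[OF assms] J_src_match[OF assms] J_natural[OF assms]
  by blast

end
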